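(* Let $X$ be a comical set, $x,y$ $0$-cubes of $X$, and $f,g$ $1$-cubes of $X$ with $f\partial_{1,0}=g\partial_{1,0}=x$ and $f\partial_{1,1}=g\partial_{1,1}=y$. Describe a $2$-cube $s$ by its quadruple of faces $(s\partial_{1,0},\,s\partial_{1,1},\,s\partial_{2,0},\,s\partial_{2,1})$. Consider the following eight boundary conditions: (1) $(g,\,y\sigma_1,\,f,\,y\sigma_1)$; (2) $(f,\,y\sigma_1,\,g,\,y\sigma_1)$; (3) $(f,\,g,\,x\sigma_1,\,y\sigma_1)$; (4) $(g,\,f,\,x\sigma_1,\,y\sigma_1)$; (5) $(x\sigma_1,\,y\sigma_1,\,f,\,g)$; (6) $(x\sigma_1,\,y\sigma_1,\,g,\,f)$; (7) $(x\sigma_1,\,f,\,x\sigma_1,\,g)$; (8) $(x\sigma_1,\,g,\,x\sigma_1,\,f)$. If there is a marked $2$-cube in $X$ satisfying one of these boundary conditions, then for each of the other seven conditions there is also a marked $2$-cube in $X$ satisfying it.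
   Context: Cubical sets are presheaves on the box category $\square$ (objects $[1]^n=\{0<1\}^n$; morphisms generated by faces $\partial_{i,\varepsilon}\colon[1]^{n-1}\to[1]^n$ inserting $\varepsilon$ as $i$-th coordinate, degeneracies $\sigma_i\colon[1]^n\to[1]^{n-1}$ deleting the $i$-th coordinate, and connections $\gamma_{i,1},\gamma_{i,0}\colon[1]^n\to[1]^{n-1}$ replacing $x_i,x_{i+1}$ by their max, resp. min); operators act on the right, so for a $0$-cube $x$, $x\sigma_1$ is the degenerate $1$-cube at $x$. A cube is degenerate if it is $x\sigma_i$ or $x\gamma_{i,\varepsilon}$; composites of faces have unique normal forms $\partial_{k_1,\varepsilon_1}\cdots\partial_{k_t,\varepsilon_t}$, $k_1>\dots>k_t$. A marked cubical set is a cubical set with marked cubes of positive dimension containing all degenerate cubes. $\tau_jX$ is $X$ with all cubes of dimension $\ge j+1$ marked. For $n\ge1$, $1\le k\le n$, $\varepsilon\in\{0,1\}$: $\square^n_{k,\varepsilon}$ is $\square^n$ in which a non-degenerate positive-dimensional face in normal form is marked iff none of its factors is $\partial_{k-1,\varepsilon},\partial_{k,0},\partial_{k,1},\partial_{k+1,\varepsilon}$; $\sqcap^n_{k,\varepsilon}$ is the union of codimension-one faces except $\partial_{k,\varepsilon}$, regularly marked. For $n\ge2$, $(\square^n_{k,\varepsilon})''=\tau_{n-2}\square^n_{k,\varepsilon}$ and $(\square^n_{k,\varepsilon})'$ is $\square^n_{k,\varepsilon}$ with all $(n-1)$-faces other than $\partial_{k,\varepsilon}$ marked. A comical set is a marked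 cubical set with the right lifting property against all $\sqcap^n_{k,\varepsilon}\hookrightarrow\square^n_{k,\varepsilon}$ and all $(\square^n_{k,\varepsilon})'\hookrightarrow(\square^n_{k,\varepsilon})''$. *)

theory Defs
  imports Main
begin

text \<open>Points of [1]^n are boolean lists of length n (False = 0, True = 1).
  Generating maps, indices 1-based as in the paper.\<close>

definition face_op :: "nat \<Rightarrow> bool \<Rightarrow> bool list \<Rightarrow> bool list" where
  "face_op i e xs = take (i - 1) xs @ e # drop (i - 1) xs"

definition degen_op :: "nat \<Rightarrow> bool list \<Rightarrow> bool list" where
  "degen_op i xs = take (i - 1) xs @ drop i xs"

definition conn_op :: "nat \<Rightarrow> bool \<Rightarrow> bool list \<Rightarrow> bool list" where
  "conn_op i e xs = take (i - 1) xs @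
     (if e then (xs ! (i - 1) \<or> xs ! i) else (xs ! (i - 1) \<and> xs ! i)) # drop (i + 1) xs"

inductive box_mor :: "nat \<Rightarrow> nat \<Rightarrow> (bool list \<Rightarrow> bool list) \<Rightarrow> bool" where
  bm_id: "box_mor n n id"
| bm_face: "box_mor m n f \<Longrightarrow> 1 \<le> i \<Longrightarrow> i \<le> Suc n \<Longrightarrow> box_mor m (Suc n) (face_op i e \<circ> f)"
| bm_degen: "box_mor m (Suc n) f \<Longrightarrow> 1 \<le> i \<Longrightarrow> i \<le> Suc n \<Longrightarrow> box_mor m n (degen_op i \<circ> f)"
| bm_conn: "box_mor m (Suc (Suc n)) f \<Longrightarrow> 1 \<le> i \<Longrightarrow> i \<le> Suc n \<Longrightarrow>
            box_mor m (Suc n) (conn_op i e \<circ> f)"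

text \<open>act X m n f x = x f  (right action) for x an n-cube and f : [1]^m \<rightarrow> [1]^n.
  marked X n x: x is a marked n-cube.\<close>
record 'a mcset =
  cubes :: "nat \<Rightarrow> 'a set"
  act :: "nat \<Rightarrow> nat \<Rightarrow> (bool list \<Rightarrow> bool list) \<Rightarrow> 'a \<Rightarrow> 'a"
  marked :: "nat \<Rightarrow> 'a \<Rightarrow> bool"

definition cubical_set :: "'a mcset \<Rightarrow> bool" where
  "cubical_set X \<longleftrightarrow>
     (\<forall>m n f x. box_mor m n f \<longrightarrow> x \<in> cubes X n \<longrightarrow> act X m n f x \<in> cubes X m) \<and>
     (\<forall>m n f g x. box_mor m n f \<longrightarrow> box_mor m n g \<longrightarrow>
        (\<forall>xs. length xs = m \<longrightarrow> f xs = g xs) \<longrightarrow> x \<in> cubes X n \<longrightarrow>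
        act X m n f x = act X m n g x) \<and>
     (\<forall>n x. x \<in> cubes X n \<longrightarrow> act X n n id x = x) \<and>
     (\<forall>m n p f g x. box_mor m n f \<longrightarrow> box_mor n p g \<longrightarrow> x \<in> cubes X p \<longrightarrow>
        act X m p (g \<circ> f) x = act X m n f (act X n p g x))"

definition marked_cubical_set :: "'a mcset \<Rightarrow> bool" where
  "marked_cubical_set X \<longleftrightarrow> cubical_set X \<and>
     (\<forall>n x. marked X n x \<longrightarrow> 0 < n \<and> x \<in> cubes X n) \<and>
     (\<forall>n i x. x \<in> cubes X n \<longrightarrow> 1 \<le> i \<longrightarrow> i \<le> Suc n \<longrightarrow>
        marked X (Suc n) (act X (Suc n) n (degen_op i) x)) \<and>
     (\<forall>n i e x. x \<in> cubes X (Suc n) \<longrightarrow> 1 \<le> i \<longrightarrow> i \<le> Suc n \<longrightarrow>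
        marked X (Suc (Suc n)) (act X (Suc (Suc n)) (Suc n) (conn_op i e) x))"

text \<open>A list [(k1,e1),...,(kt,et)] with k1 > ... > kt denotes the face
  \<partial>_{k1,e1} ... \<partial>_{kt,et} of [1]^n, of dimension n - t.\<close>
definition normal_face :: "nat \<Rightarrow> (nat \<times> bool) list \<Rightarrow> bool" where
  "normal_face n ks \<longleftrightarrow> sorted_wrt (\<lambda>a b. fst b < fst a) ks \<and> (\<forall>(i, e) \<in> set ks. 1 \<le> i \<and> i \<le> n)"

definition fcomp :: "(nat \<times> bool) list \<Rightarrow> bool list \<Rightarrow> bool list" where
  "fcomp ks = foldr (\<lambda>(i, e) h. face_op i e \<circ> h) ks id"

definition face_cube :: "'a mcset \<Rightarrow> nat \<Rightarrow> (nat \<times> bool) list \<Rightarrow> 'a \<Rightarrow> 'a" where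
  "face_cube X n ks x = act X (n - length ks) n (fcomp ks) x"

text \<open>Marking of \<box>^n_{k,e}: no factor among \<partial>_{k-1,e}, \<partial>_{k,0}, \<partial>_{k,1}, \<partial>_{k+1,e}.\<close>
definition good_face :: "nat \<Rightarrow> bool \<Rightarrow> (nat \<times> bool) list \<Rightarrow> bool" where
  "good_face k e ks \<longleftrightarrow> (\<forall>(i, d) \<in> set ks. (i, d) \<noteq> (k - 1, e) \<and> i \<noteq> k \<and> (i, d) \<noteq> (k + 1, e))"

text \<open>Maps of marked cubical sets \<box>^n_{k,e} \<rightarrow> X (by Yoneda: n-cubes x).\<close>
definition box_map :: "'a mcset \<Rightarrow> nat \<Rightarrow> nat \<Rightarrow> bool \<Rightarrow> 'a \<Rightarrow> bool" where
  "box_map X n k e x \<longleftrightarrow> x \<in> cubes X n \<and>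
     (\<forall>ks. normal_face n ks \<and> length ks < n \<and> good_face k e ks \<longrightarrow>
        marked X (n - length ks) (face_cube X n ks x))"

definition box_map' :: "'a mcset \<Rightarrow> nat \<Rightarrow> nat \<Rightarrow> bool \<Rightarrow> 'a \<Rightarrow> bool" where
  "box_map' X n k e x \<longleftrightarrow> box_map X n k e x \<and>
     (\<forall>i d. 1 \<le> i \<and> i \<le> n \<and> (i, d) \<noteq> (k, e) \<longrightarrow> marked X (n - 1) (face_cube X n [(i, d)] x))"

text \<open>Maps (\<box>^n_{k,e})'' = \<tau>_{n-2} \<box>^n_{k,e} \<rightarrow> X.\<close>
definition box_map'' :: "'a mcset \<Rightarrow> nat \<Rightarrow> nat \<Rightarrow> bool \<Rightarrow> 'a \<Rightarrow> bool" where
  "box_map'' X n k e x \<longleftrightarrow> box_map X n k e x \<and>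
     (\<forall>ks. normal_face n ks \<and> length ks \<le> 1 \<longrightarrow> marked X (n - length ks) (face_cube X n ks x))"

text \<open>Maps \<sqcap>^n_{k,e} \<rightarrow> X: compatible families y i d of (n-1)-cubes, (i,d) \<noteq> (k,e),
  sending regularly marked faces to marked cubes.\<close>
definition open_box_map :: "'a mcset \<Rightarrow> nat \<Rightarrow> nat \<Rightarrow> bool \<Rightarrow> (nat \<Rightarrow> bool \<Rightarrow> 'a) \<Rightarrow> bool" where
  "open_box_map X n k e y \<longleftrightarrow>
     (\<forall>i d. 1 \<le> i \<and> i \<le> n \<and> (i, d) \<noteq> (k, e) \<longrightarrow> y i d \<in> cubes X (n - 1)) \<and>
     (\<forall>i d j d'. 1 \<le> i \<and> i < j \<and> j \<le> n \<and> (i, d) \<noteq> (k, e) \<and> (j, d') \<noteq> (k, e) \<longrightarrow>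
        act X (n - 2) (n - 1) (face_op i d) (y j d') = act X (n - 2) (n - 1) (face_op (j - 1) d') (y i d)) \<and>
     (\<forall>i d ks. normal_face n ((i, d) # ks) \<and> Suc (length ks) < n \<and> good_face k e ((i, d) # ks) \<longrightarrow>
        marked X (n - 1 - length ks) (face_cube X (n - 1) ks (y i d)))"

definition comical :: "'a mcset \<Rightarrow> bool" where
  "comical X \<longleftrightarrow> marked_cubical_set X \<and>
     (\<forall>n k e y. 1 \<le> n \<and> 1 \<le> k \<and> k \<le> n \<and> open_box_map X n k e y \<longrightarrow>
        (\<exists>x. box_map X n k e x \<and>
           (\<forall>i d. 1 \<le> i \<and> i \<le> n \<and> (i, d) \<noteq> (k, e) \<longrightarrow> face_cube X n [(i, d)] x = y i d))) \<and>
     (\<forall>n k e x. 2 \<le> n \<and> 1 \<le> k \<and> k \<le> n \<and> box_map' X n k e x \<longrightarrow> box_map'' X n k e x)"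

end

theory Submission
  imports Defs
begin

text \<open>Each implication comes from a 3-cube. The given marked square, together with
  degeneracies and connections of \<open>f\<close>, \<open>g\<close>, \<open>x\<close>, \<open>y\<close>, forms an open 3-box of marked squares,
  which the comical set fills. All faces of the filler other than the missing one are marked, so
  the lifting property against \<open>(\<box>\<^sup>3\<^sub>k\<^sub>,\<^sub>\<epsilon>)' \<hookrightarrow> (\<box>\<^sup>3\<^sub>k\<^sub>,\<^sub>\<epsilon>)''\<close> marks the missing face as well,
  and its boundary, read off from the box by the cubical identities, is the required one.
  Four such fillings give (1) \<Rightarrow> (3) \<Rightarrow> (5) \<Rightarrow> (7) \<Rightarrow> (2); exchanging \<open>f\<close> and \<open>g\<close> gives
  (2) \<Rightarrow> (4) \<Rightarrow> (6) \<Rightarrow> (8) \<Rightarrow> (1).\<close>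

lemma box_mor_face: "1 \<le> i \<Longrightarrow> i \<le> Suc n \<Longrightarrow> box_mor n (Suc n) (face_op i e)"
  using bm_face[OF bm_id, of i n e] by simp

lemma box_mor_degen: "1 \<le> i \<Longrightarrow> i \<le> Suc n \<Longrightarrow> box_mor (Suc n) n (degen_op i)"
  using bm_degen[OF bm_id, of i n] by simp

lemma box_mor_conn: "1 \<le> i \<Longrightarrow> i \<le> Suc n \<Longrightarrow> box_mor (Suc (Suc n)) (Suc n) (conn_op i e)"
  using bm_conn[OF bm_id, of i n e] by simp

lemma box_mor_comp: "box_mor a b g \<Longrightarrow> box_mor c a h \<Longrightarrow> box_mor c b (g \<circ> h)"
proof (induction rule: box_mor.induct)
  case (bm_id n)
  then show ?case by simp
next
  case (bm_face m n f i e)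
  then show ?case using box_mor.bm_face[of c n "f \<circ> h" i e] by (simp only: comp_assoc)
next
  case (bm_degen m n f i)
  then show ?case using box_mor.bm_degen[of c n "f \<circ> h" i] by (simp only: comp_assoc)
next
  case (bm_conn m n f i e)
  then show ?case using box_mor.bm_conn[of c n "f \<circ> h" i e] by (simp only: comp_assoc)
qed

lemmas box_mor_intros = box_mor_face box_mor_degen box_mor_conn box_mor_comp

lemma face_op_face_op:
  assumes "1 \<le> j" "j < k" "k \<le> length xs + 2"
  shows "face_op k e (face_op j e' xs) = face_op j e' (face_op (k - 1) e xs)"
proof -
  have "face_op k e (face_op j e' xs) =
      take (j - 1) xs @ e' # take (k - 1 - j) (drop (j - 1) xs) @ e # drop (k - 2) xs"
    using assms by (simp add: face_op_def take_Cons' drop_Cons' numeral_2_eq_2)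
  also have "\<dots> = face_op j e' (face_op (k - 1) e xs)"
    using assms by (simp add: face_op_def drop_take numeral_2_eq_2)
  finally show ?thesis .
qed

lemma act_in_cubes:
  "cubical_set X \<Longrightarrow> box_mor m n f \<Longrightarrow> x \<in> cubes X n \<Longrightarrow> act X m n f x \<in> cubes X m"
  unfolding cubical_set_def by blast

lemma act_act:
  "cubical_set X \<Longrightarrow> box_mor m n f \<Longrightarrow> box_mor n p g \<Longrightarrow> x \<in> cubes X p \<Longrightarrow>
    act X m n f (act X n p g x) = act X m p (g \<circ> f) x"
  unfolding cubical_set_def by metis

lemma act_cong:
  "cubical_set X \<Longrightarrow> box_mor m n f \<Longrightarrow> box_mor m n g \<Longrightarrow> (\<And>xs. length xs = m \<Longrightarrow> f xs = g xs) \<Longrightarrow>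
    x \<in> cubes X n \<Longrightarrow> act X m n f x = act X m n g x"
  unfolding cubical_set_def by blast

lemma act_act_eq:
  assumes "cubical_set X" "box_mor m n F" "box_mor n p G" "box_mor m n' F'" "box_mor n' p G'"
    and "\<And>xs. length xs = m \<Longrightarrow> G (F xs) = G' (F' xs)" "z \<in> cubes X p"
  shows "act X m n F (act X n p G z) = act X m n' F' (act X n' p G' z)"
proof -
  have "act X m n F (act X n p G z) = act X m p (G \<circ> F) z"
    using assms by (simp add: act_act)
  also have "\<dots> = act X m p (G' \<circ> F') z"
    using assms by (intro act_cong box_mor_comp) auto
  also have "\<dots> = act X m n' F' (act X n' p G' z)"
    using assms by (simp add: act_act)
  finally show ?thesis .
qed

lemma act_act_eq_self:
  assumes "cubical_set X" "box_mor m n F" "box_mor n m G"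
    and "\<And>xs. length xs = m \<Longrightarrow> G (F xs) = xs" "z \<in> cubes X m"
  shows "act X m n F (act X n m G z) = z"
proof -
  have "act X m n F (act X n m G z) = act X m m (G \<circ> F) z"
    using assms by (simp add: act_act)
  also have "\<dots> = act X m m id z"
    using assms by (intro act_cong box_mor_comp bm_id) auto
  also have "\<dots> = z"
    using assms unfolding cubical_set_def by blast
  finally show ?thesis .
qed

lemma act_face_face:
  assumes "cubical_set X" "w \<in> cubes X (Suc (Suc n))" "1 \<le> j" "j < k" "k \<le> n + 2"
  shows "act X n (Suc n) (face_op j e') (act X (Suc n) (Suc (Suc n)) (face_op k e) w) =
         act X n (Suc n) (face_op (k - 1) e) (act X (Suc n) (Suc (Suc n)) (face_op j e') w)"
  using assms by (intro act_act_eq) (auto intro!: box_mor_face simp: face_op_face_op)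

abbreviation const_edge :: "'a mcset \<Rightarrow> 'a \<Rightarrow> 'a" where
  "const_edge X p \<equiv> act X 1 0 (degen_op 1) p"

abbreviation endpoint :: "'a mcset \<Rightarrow> bool \<Rightarrow> 'a \<Rightarrow> 'a" where
  "endpoint X d h \<equiv> act X 0 1 (face_op 1 d) h"

context
  fixes X :: "'a mcset"
  assumes X: "cubical_set X"
begin

lemma endpoint_const_edge: "p \<in> cubes X 0 \<Longrightarrow> endpoint X d (const_edge X p) = p"
  by (rule act_act_eq_self[OF X]) (auto simp: face_op_def degen_op_def intro!: box_mor_intros)

lemma const_edge_in_cubes: "p \<in> cubes X 0 \<Longrightarrow> const_edge X p \<in> cubes X 1"
  by (rule act_in_cubes[OF X]) (auto intro!: box_mor_intros)

lemma degen_square_in_cubes: "h \<in> cubes X 1 \<Longrightarrow> i \<in> {1, 2} \<Longrightarrow> act X 2 1 (degen_op i) h \<in> cubes X 2"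
  by (rule act_in_cubes[OF X]) (auto simp: numeral_2_eq_2 intro!: box_mor_intros)

lemma conn_square_in_cubes: "h \<in> cubes X 1 \<Longrightarrow> act X 2 1 (conn_op 1 e) h \<in> cubes X 2"
  by (rule act_in_cubes[OF X]) (auto simp: numeral_2_eq_2 intro!: box_mor_intros)

lemma faces_degen1:
  assumes "h \<in> cubes X 1"
  shows "act X 1 2 (face_op 1 d) (act X 2 1 (degen_op 1) h) = h"
    and "act X 1 2 (face_op 2 d) (act X 2 1 (degen_op 1) h) = const_edge X (endpoint X d h)"
  by (rule act_act_eq_self[OF X _ _ _ assms] act_act_eq[OF X _ _ _ _ _ assms];
      auto simp: face_op_def degen_op_def conn_op_def numeral_2_eq_2 length_Suc_conv intro!: box_mor_intros)+

lemma faces_degen2: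
  assumes "h \<in> cubes X 1"
  shows "act X 1 2 (face_op 1 d) (act X 2 1 (degen_op 2) h) = const_edge X (endpoint X d h)"
    and "act X 1 2 (face_op 2 d) (act X 2 1 (degen_op 2) h) = h"
  by (rule act_act_eq_self[OF X _ _ _ assms] act_act_eq[OF X _ _ _ _ _ assms];
      auto simp: face_op_def degen_op_def conn_op_def numeral_2_eq_2 length_Suc_conv intro!: box_mor_intros)+

lemma faces_conn_max:
  assumes "h \<in> cubes X 1"
  shows "act X 1 2 (face_op 1 False) (act X 2 1 (conn_op 1 True) h) = h"
    and "act X 1 2 (face_op 2 False) (act X 2 1 (conn_op 1 True) h) = h"
    and "act X 1 2 (face_op 1 True) (act X 2 1 (conn_op 1 True) h) = const_edge X (endpoint X True h)"
    and "act X 1 2 (face_op 2 True) (act X 2 1 (conn_op 1 True) h) = const_edge X (endpoint X True h)"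
  by (rule act_act_eq_self[OF X _ _ _ assms] act_act_eq[OF X _ _ _ _ _ assms];
      auto simp: face_op_def degen_op_def conn_op_def numeral_2_eq_2 length_Suc_conv intro!: box_mor_intros)+

lemma faces_conn_min:
  assumes "h \<in> cubes X 1"
  shows "act X 1 2 (face_op 1 True) (act X 2 1 (conn_op 1 False) h) = h"
    and "act X 1 2 (face_op 2 True) (act X 2 1 (conn_op 1 False) h) = h"
    and "act X 1 2 (face_op 1 False) (act X 2 1 (conn_op 1 False) h) = const_edge X (endpoint X False h)"
    and "act X 1 2 (face_op 2 False) (act X 2 1 (conn_op 1 False) h) = const_edge X (endpoint X False h)"
  by (rule act_act_eq_self[OF X _ _ _ assms] act_act_eq[OF X _ _ _ _ _ assms];
      auto simp: face_op_def degen_op_def conn_op_def numeral_2_eq_2 length_Suc_conv intro!: box_mor_intros)+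

end

context
  fixes X :: "'a mcset"
  assumes X: "marked_cubical_set X"
begin

lemma marked_degen:
  "x \<in> cubes X n \<Longrightarrow> 1 \<le> i \<Longrightarrow> i \<le> Suc n \<Longrightarrow> marked X (Suc n) (act X (Suc n) n (degen_op i) x)"
  using X unfolding marked_cubical_set_def by blast

lemma marked_conn:
  "x \<in> cubes X (Suc n) \<Longrightarrow> 1 \<le> i \<Longrightarrow> i \<le> Suc n \<Longrightarrow>
    marked X (Suc (Suc n)) (act X (Suc (Suc n)) (Suc n) (conn_op i e) x)"
  using X unfolding marked_cubical_set_def by blast

lemma marked_const_edge: "p \<in> cubes X 0 \<Longrightarrow> marked X 1 (const_edge X p)"
  using marked_degen[of p 0 1] by simp

lemma marked_degen_square: "h \<in> cubes X 1 \<Longrightarrow> i \<in> {1, 2} \<Longrightarrow> marked X 2 (act X 2 1 (degen_op i) h)"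
  using marked_degen[of h 1 i] by (auto simp: numeral_2_eq_2)

lemma marked_conn_square: "h \<in> cubes X 1 \<Longrightarrow> marked X 2 (act X 2 1 (conn_op 1 e) h)"
  using marked_conn[of h 0 1 e] by (simp add: numeral_2_eq_2)

end

lemma fcomp_single: "fcomp [(i, d)] = face_op i d"
  by (simp add: fcomp_def)

lemma comical_marked_filler:
  assumes X: "comical X" and n: "2 \<le> n" and k: "1 \<le> k" "k \<le> n"
    and box: "open_box_map X n k e y"
    and marked: "\<And>i d. 1 \<le> i \<Longrightarrow> i \<le> n \<Longrightarrow> (i, d) \<noteq> (k, e) \<Longrightarrow> marked X (n - 1) (y i d)"
  obtains w where "w \<in> cubes X n"
    and "\<And>i d. 1 \<le> i \<Longrightarrow> i \<le> n \<Longrightarrow> (i, d) \<noteq> (k, e) \<Longrightarrow> act X (n - 1) n (face_op i d) w = y i d"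
    and "marked X (n - 1) (act X (n - 1) n (face_op k e) w)"
proof -
  have "1 \<le> n"
    using n by simp
  then obtain w where w: "box_map X n k e w"
    and faces: "\<forall>i d. 1 \<le> i \<and> i \<le> n \<and> (i, d) \<noteq> (k, e) \<longrightarrow> face_cube X n [(i, d)] w = y i d"
    using X k box unfolding comical_def by blast
  have "box_map' X n k e w"
    using w faces marked unfolding box_map'_def by auto
  then have "box_map'' X n k e w"
    using X n k unfolding comical_def by blast
  then have "\<forall>ks. normal_face n ks \<and> length ks \<le> 1 \<longrightarrow> marked X (n - length ks) (face_cube X n ks w)"
    unfolding box_map''_def by blast
  moreover have "normal_face n [(k, e)]"
    using k by (simp add: normal_face_def)
  ultimately have "marked X (n - 1) (face_cube X n [(k, e)] w)"
    by fastforce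
  moreover have "w \<in> cubes X n"
    using w unfolding box_map_def by blast
  ultimately show ?thesis
    using that faces by (simp add: face_cube_def fcomp_single)
qed

lemma open_box_map_3I:
  assumes X: "cubical_set X"
    and cubes: "\<forall>i\<in>{1,2,3}. \<forall>d. (i, d) \<noteq> (k, e) \<longrightarrow> y i d \<in> cubes X 2 \<and> marked X 2 (y i d)"
    and compat: "\<forall>i\<in>{1,2,3}. \<forall>j\<in>{1,2,3}. \<forall>d d'. i < j \<longrightarrow> (i, d) \<noteq> (k, e) \<longrightarrow> (j, d') \<noteq> (k, e) \<longrightarrow>
      act X 1 2 (face_op i d) (y j d') = act X 1 2 (face_op (j - 1) d') (y i d)"
    and edges: "\<forall>i\<in>{1,2,3}. \<forall>j\<in>{1,2,3}. \<forall>d d'. j < i \<longrightarrow> good_face k e [(i, d), (j, d')] \<longrightarrow>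
      marked X 1 (act X 1 2 (face_op j d') (y i d))"
  shows "open_box_map X 3 k e y"
proof -
  have range: "1 \<le> i \<Longrightarrow> i \<le> 3 \<Longrightarrow> i \<in> {1, 2, 3}" for i :: nat
    by auto
  show ?thesis
    unfolding open_box_map_def
  proof (intro conjI allI impI)
    fix i d
    assume a: "1 \<le> i \<and> i \<le> 3 \<and> (i, d) \<noteq> (k, e)"
    then have "y i d \<in> cubes X 2"
      using cubes[rule_format, of i d] range by blast
    then show "y i d \<in> cubes X (3 - 1)"
      by simp
  next
    fix i d j d'
    assume a: "1 \<le> i \<and> i < j \<and> j \<le> 3 \<and> (i, d) \<noteq> (k, e) \<and> (j, d') \<noteq> (k, e)"
    then have "i \<in> {1, 2, 3}" "j \<in> {1, 2, 3}"
      using range by auto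
    then have "act X 1 2 (face_op i d) (y j d') = act X 1 2 (face_op (j - 1) d') (y i d)"
      using compat[rule_format, of i j d d'] a by blast
    then show "act X (3 - 2) (3 - 1) (face_op i d) (y j d') = act X (3 - 2) (3 - 1) (face_op (j - 1) d') (y i d)"
      by simp
  next
    fix i d ks
    assume a: "normal_face 3 ((i, d) # ks) \<and> Suc (length ks) < 3 \<and> good_face k e ((i, d) # ks)"
    then have i: "i \<in> {1, 2, 3}" "(i, d) \<noteq> (k, e)"
      using range by (auto simp: normal_face_def good_face_def)
    show "marked X (3 - 1 - length ks) (face_cube X (3 - 1) ks (y i d))"
    proof (cases ks)
      case Nil
      have "y i d \<in> cubes X 2" "marked X 2 (y i d)"
        using cubes[rule_format, of i d] i by blast+
      moreover have "act X 2 2 id (y i d) = y i d"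
        using X calculation(1) unfolding cubical_set_def by blast
      ultimately show ?thesis
        using Nil unfolding face_cube_def fcomp_def by simp
    next
      case (Cons p ks')
      obtain j d' where ks: "ks = [(j, d')]"
        using a Cons by (cases p) auto
      then have "j < i" "1 \<le> j"
        using a unfolding normal_face_def by auto
      then have "j \<in> {1, 2, 3}"
        using i range by auto
      moreover have "good_face k e [(i, d), (j, d')]"
        using a ks by simp
      ultimately have "marked X 1 (act X 1 2 (face_op j d') (y i d))"
        using edges[rule_format, of i j d d'] i \<open>j < i\<close> by blast
      then show ?thesis
        using ks by (simp add: face_cube_def fcomp_single)
    qed
  qed
qed

text \<open>By the cubical identity \<open>\<partial>\<^sub>k\<^sub>,\<^sub>e \<partial>\<^sub>j\<^sub>,\<^sub>d = \<partial>\<^sub>j\<^sub>,\<^sub>d \<partial>\<^sub>k\<^sub>-\<^sub>1\<^sub>,\<^sub>e\<close> for \<open>j < k\<close>, every edge of the missing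
  face \<open>\<partial>\<^sub>k\<^sub>,\<^sub>e\<close> of a 3-cube is an edge of one of the faces \<open>y\<close> of the open box.\<close>
definition missing_face_edge :: "'a mcset \<Rightarrow> nat \<Rightarrow> bool \<Rightarrow> (nat \<Rightarrow> bool \<Rightarrow> 'a) \<Rightarrow> nat \<Rightarrow> bool \<Rightarrow> 'a" where
  "missing_face_edge X k e y j d =
    (if j < k then act X 1 2 (face_op (k - 1) e) (y j d) else act X 1 2 (face_op k e) (y (Suc j) d))"

definition marked_square :: "'a mcset \<Rightarrow> 'a \<Rightarrow> 'a \<Rightarrow> 'a \<Rightarrow> 'a \<Rightarrow> bool" where
  "marked_square X a b c d \<longleftrightarrow> (\<exists>s. s \<in> cubes X 2 \<and> marked X 2 s \<and>
     act X 1 2 (face_op 1 False) s = a \<and> act X 1 2 (face_op 1 True) s = b \<and>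
     act X 1 2 (face_op 2 False) s = c \<and> act X 1 2 (face_op 2 True) s = d)"

lemma comical_fill_square:
  assumes X: "comical X" and k: "1 \<le> k" "k \<le> 3"
    and cubes: "\<forall>i\<in>{1,2,3}. \<forall>d. (i, d) \<noteq> (k, e) \<longrightarrow> y i d \<in> cubes X 2 \<and> marked X 2 (y i d)"
    and compat: "\<forall>i\<in>{1,2,3}. \<forall>j\<in>{1,2,3}. \<forall>d d'. i < j \<longrightarrow> (i, d) \<noteq> (k, e) \<longrightarrow> (j, d') \<noteq> (k, e) \<longrightarrow>
      act X 1 2 (face_op i d) (y j d') = act X 1 2 (face_op (j - 1) d') (y i d)"
    and edges: "\<forall>i\<in>{1,2,3}. \<forall>j\<in>{1,2,3}. \<forall>d d'. j < i \<longrightarrow> good_face k e [(i, d), (j, d')] \<longrightarrow>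
      marked X 1 (act X 1 2 (face_op j d') (y i d))"
  shows "marked_square X (missing_face_edge X k e y 1 False) (missing_face_edge X k e y 1 True)
    (missing_face_edge X k e y 2 False) (missing_face_edge X k e y 2 True)"
proof -
  have cs: "cubical_set X"
    using X unfolding comical_def marked_cubical_set_def by blast
  have box: "open_box_map X 3 k e y"
    using open_box_map_3I[OF cs cubes compat edges] .
  have marked: "marked X (3 - 1) (y i d)" if "1 \<le> i" "i \<le> 3" "(i, d) \<noteq> (k, e)" for i d
  proof -
    have "i \<in> {1, 2, 3}"
      using that by auto
    then show ?thesis
      using cubes[rule_format, of i d] that by simp
  qed
  obtain w where w: "w \<in> cubes X 3"
    and faces: "\<And>i d. 1 \<le> i \<Longrightarrow> i \<le> 3 \<Longrightarrow> (i, d) \<noteq> (k, e) \<Longrightarrow> act X (3 - 1) 3 (face_op i d) w = y i d"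
    and lid: "marked X (3 - 1) (act X (3 - 1) 3 (face_op k e) w)"
    by (rule comical_marked_filler[OF X _ k box marked]) auto
  have "act X 1 2 (face_op j d) (act X 2 3 (face_op k e) w) = missing_face_edge X k e y j d"
    if "1 \<le> j" "j \<le> 2" for j d
  proof (cases "j < k")
    case True
    then show ?thesis
      using act_face_face[OF cs, of w 1 j k d e] w faces[of j d] that k
      by (simp add: missing_face_edge_def numeral_2_eq_2 numeral_3_eq_3)
  next
    case False
    then show ?thesis
      using act_face_face[OF cs, of w 1 k "Suc j" e d] w faces[of "Suc j" d] that k
      by (simp add: missing_face_edge_def numeral_2_eq_2 numeral_3_eq_3)
  qed
  moreover have "act X 2 3 (face_op k e) w \<in> cubes X 2"
    using k w by (intro act_in_cubes[OF cs] box_mor_face[of k 2, simplified]) auto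
  ultimately show ?thesis
    unfolding marked_square_def using lid by auto
qed

definition open_box3 :: "'a \<Rightarrow> 'a \<Rightarrow> 'a \<Rightarrow> 'a \<Rightarrow> 'a \<Rightarrow> 'a \<Rightarrow> nat \<Rightarrow> bool \<Rightarrow> 'a" where
  "open_box3 a0 a1 b0 b1 c0 c1 i d =
    (if i = 1 then (if d then a1 else a0) else if i = 2 then (if d then b1 else b0) else (if d then c1 else c0))"

context
  fixes X :: "'a mcset" and x y f g :: 'a
  assumes X: "comical X"
    and x: "x \<in> cubes X 0" and y: "y \<in> cubes X 0" and f: "f \<in> cubes X 1" and g: "g \<in> cubes X 1"
    and f0: "endpoint X False f = x" and g0: "endpoint X False g = x"
    and f1: "endpoint X True f = y" and g1: "endpoint X True g = y"
begin

lemma marked_cubical: "marked_cubical_set X"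
  using X unfolding comical_def by blast

lemma cubical: "cubical_set X"
  using marked_cubical unfolding marked_cubical_set_def by blast

lemmas square_simps[simplified] = open_box3_def missing_face_edge_def good_face_def all_bool_eq
  faces_degen1[OF cubical] faces_degen2[OF cubical] faces_conn_max[OF cubical] faces_conn_min[OF cubical]
  endpoint_const_edge[OF cubical] const_edge_in_cubes[OF cubical]
  degen_square_in_cubes[OF cubical] conn_square_in_cubes[OF cubical]
  marked_const_edge[OF marked_cubical] marked_degen_square[OF marked_cubical] marked_conn_square[OF marked_cubical]
  x y f g f0 g0 f1 g1

lemma marked_square_1_imp_3:
  assumes "marked_square X g (const_edge X y) f (const_edge X y)"
  shows "marked_square X f g (const_edge X x) (const_edge X y)"
proof -
  obtain s where s: "s \<in> cubes X 2" "marked X 2 s"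
    "act X 1 2 (face_op 1 False) s = g" "act X 1 2 (face_op 1 True) s = const_edge X y"
    "act X 1 2 (face_op 2 False) s = f" "act X 1 2 (face_op 2 True) s = const_edge X y"
    using assms unfolding marked_square_def by blast
  define box where "box = open_box3
    (act X 2 1 (degen_op 1) f) s
    undefined (act X 2 1 (conn_op 1 True) f)
    (act X 2 1 (conn_op 1 False) f) (act X 2 1 (degen_op 1) (const_edge X y))"
  have "marked_square X (missing_face_edge X 2 False box 1 False) (missing_face_edge X 2 False box 1 True)
    (missing_face_edge X 2 False box 2 False) (missing_face_edge X 2 False box 2 True)"
    by (rule comical_fill_square[OF X]) (simp_all add: box_def square_simps s[simplified])
  then show ?thesis
    by (simp add: box_def square_simps s[simplified])
qed

lemma marked_square_3_imp_5:
  assumes "marked_square X f g (const_edge X x) (const_edge X y)"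
  shows "marked_square X (const_edge X x) (const_edge X y) f g"
proof -
  obtain s where s: "s \<in> cubes X 2" "marked X 2 s"
    "act X 1 2 (face_op 1 False) s = f" "act X 1 2 (face_op 1 True) s = g"
    "act X 1 2 (face_op 2 False) s = const_edge X x" "act X 1 2 (face_op 2 True) s = const_edge X y"
    using assms unfolding marked_square_def by blast
  define box where "box = open_box3
    undefined (act X 2 1 (degen_op 2) g)
    (act X 2 1 (degen_op 1) (const_edge X x)) (act X 2 1 (degen_op 1) (const_edge X y))
    s (act X 2 1 (degen_op 1) g)"
  have "marked_square X (missing_face_edge X 1 False box 1 False) (missing_face_edge X 1 False box 1 True)
    (missing_face_edge X 1 False box 2 False) (missing_face_edge X 1 False box 2 True)"
    by (rule comical_fill_square[OF X]) (simp_all add: box_def square_simps s[simplified])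
  then show ?thesis
    by (simp add: box_def square_simps s[simplified])
qed

lemma marked_square_5_imp_7:
  assumes "marked_square X (const_edge X x) (const_edge X y) f g"
  shows "marked_square X (const_edge X x) f (const_edge X x) g"
proof -
  obtain s where s: "s \<in> cubes X 2" "marked X 2 s"
    "act X 1 2 (face_op 1 False) s = const_edge X x" "act X 1 2 (face_op 1 True) s = const_edge X y"
    "act X 1 2 (face_op 2 False) s = f" "act X 1 2 (face_op 2 True) s = g"
    using assms unfolding marked_square_def by blast
  define box where "box = open_box3
    (act X 2 1 (degen_op 1) (const_edge X x)) (act X 2 1 (conn_op 1 True) f)
    undefined s
    (act X 2 1 (conn_op 1 False) f) (act X 2 1 (degen_op 2) g)"
  have "marked_square X (missing_face_edge X 2 False box 1 False) (missing_face_edge X 2 False box 1 True)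
    (missing_face_edge X 2 False box 2 False) (missing_face_edge X 2 False box 2 True)"
    by (rule comical_fill_square[OF X]) (simp_all add: box_def square_simps s[simplified])
  then show ?thesis
    by (simp add: box_def square_simps s[simplified])
qed

lemma marked_square_7_imp_2:
  assumes "marked_square X (const_edge X x) f (const_edge X x) g"
  shows "marked_square X f (const_edge X y) g (const_edge X y)"
proof -
  obtain s where s: "s \<in> cubes X 2" "marked X 2 s"
    "act X 1 2 (face_op 1 False) s = const_edge X x" "act X 1 2 (face_op 1 True) s = f"
    "act X 1 2 (face_op 2 False) s = const_edge X x" "act X 1 2 (face_op 2 True) s = g"
    using assms unfolding marked_square_def by blast
  define box where "box = open_box3
    (act X 2 1 (degen_op 1) f) (act X 2 1 (conn_op 1 True) f)
    (act X 2 1 (degen_op 1) f) undefined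
    s (act X 2 1 (degen_op 1) (const_edge X y))"
  have "marked_square X (missing_face_edge X 2 True box 1 False) (missing_face_edge X 2 True box 1 True)
    (missing_face_edge X 2 True box 2 False) (missing_face_edge X 2 True box 2 True)"
    by (rule comical_fill_square[OF X]) (simp_all add: box_def square_simps s[simplified])
  then show ?thesis
    by (simp add: box_def square_simps s[simplified])
qed

end

theorem proposition4p1:
  fixes X :: "'a mcset" and x y f g :: 'a
  assumes "comical X"
    and "x \<in> cubes X 0" and "y \<in> cubes X 0" and "f \<in> cubes X 1" and "g \<in> cubes X 1"
    and "act X 0 1 (face_op 1 False) f = x" and "act X 0 1 (face_op 1 False) g = x"
    and "act X 0 1 (face_op 1 True) f = y" and "act X 0 1 (face_op 1 True) g = y"
  defines "xs1 \<equiv> act X 1 0 (degen_op 1) x" and "ys1 \<equiv> act X 1 0 (degen_op 1) y"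
  defines "conds \<equiv> [(g, ys1, f, ys1), (f, ys1, g, ys1), (f, g, xs1, ys1), (g, f, xs1, ys1),
                    (xs1, ys1, f, g), (xs1, ys1, g, f), (xs1, f, xs1, g), (xs1, g, xs1, f)]"
  defines "bdry \<equiv> \<lambda>s. (act X 1 2 (face_op 1 False) s, act X 1 2 (face_op 1 True) s,
                        act X 1 2 (face_op 2 False) s, act X 1 2 (face_op 2 True) s)"
  assumes "i < 8" and "j < 8"
    and "\<exists>s. s \<in> cubes X 2 \<and> marked X 2 s \<and> bdry s = conds ! i"
  shows "\<exists>s. s \<in> cubes X 2 \<and> marked X 2 s \<and> bdry s = conds ! j"
proof -
  have bdry_iff: "(\<exists>s. s \<in> cubes X 2 \<and> marked X 2 s \<and> bdry s = (a, b, c, d)) \<longleftrightarrow> marked_square X a b c d"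
    for a b c d
    unfolding bdry_def marked_square_def by auto
  note fg = assms(1-9)
  note gf = assms(1-3) assms(5) assms(4) assms(7) assms(6) assms(9) assms(8)
  note cycle = marked_square_1_imp_3[OF fg] marked_square_3_imp_5[OF fg]
    marked_square_5_imp_7[OF fg] marked_square_7_imp_2[OF fg]
    marked_square_1_imp_3[OF gf] marked_square_3_imp_5[OF gf]
    marked_square_5_imp_7[OF gf] marked_square_7_imp_2[OF gf]
  have "(\<exists>s. s \<in> cubes X 2 \<and> marked X 2 s \<and> bdry s = conds ! k) \<longleftrightarrow> marked_square X g ys1 f ys1"
    if "k < 8" for k
  proof -
    have "k = 0 \<or> k = 1 \<or> k = 2 \<or> k = 3 \<or> k = 4 \<or> k = 5 \<or> k = 6 \<or> k = 7"
      using that by arith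
    then show ?thesis
      by (elim disjE; simp add: conds_def xs1_def ys1_def bdry_iff) (use cycle[simplified] in blast)+
  qed
  then show ?thesis
    using \<open>i < 8\<close> \<open>j < 8\<close> \<open>\<exists>s. s \<in> cubes X 2 \<and> marked X 2 s \<and> bdry s = conds ! i\<close> by blast
qed

end
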